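(* Let $m\ge1$ be an integer and $\delta_1>0$. There is $\delta_2=\delta_2(\delta_1)>0$ such that if $u\in E_0$ satisfies $E(u)\le 2E(Q)-\delta_1$, then $|u(r)|\le\pi-\delta_2$ for all $r\geq 0$.
   Context: $E(u)=\frac12\int_0^\infty\big(u_r^2+\frac{m^2\sin^2 u}{r^2}\big)r\,dr$; $Q(r)=\pi-2\arctan(r^m)$, so $E(Q)=2m$. $E_0=\{u:[0,\infty)\to\mathbb R\;:\;E(u)<2E(Q),\ \lim_{r\to0^+}u(r)=0,\ \lim_{r\to\infty}u(r)=0\}$. *)

theory Defs
  imports "HOL-Analysis.Analysis"
begin

definition Qprof :: "nat \<Rightarrow> real \<Rightarrow> real" where
  "Qprof m r = pi - 2 * arctan (r ^ m)"

text \<open>Locally absolutely continuous on (0,infinity): u is the indefinite integral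
  of a locally Lebesgue integrable function (the natural class on which u_r makes sense).\<close>
definition loc_abs_cont :: "(real \<Rightarrow> real) \<Rightarrow> bool" where
  "loc_abs_cont u \<longleftrightarrow> (\<exists>g. \<forall>a b. 0 < a \<longrightarrow> a \<le> b \<longrightarrow>
      set_integrable lborel {a..b} g \<and> u b - u a = (LBINT t=a..b. g t))"

definition energy :: "nat \<Rightarrow> (real \<Rightarrow> real) \<Rightarrow> ennreal" where
  "energy m u = (\<integral>\<^sup>+ r. indicator {0<..} r *
      ennreal ((1/2) * ((deriv u r)\<^sup>2 + (real m)\<^sup>2 * (sin (u r))\<^sup>2 / r\<^sup>2) * r) \<partial>lborel)"

definition E0 :: "nat \<Rightarrow> (real \<Rightarrow> real) set" where
  "E0 m = {u. loc_abs_cont u \<and> continuous_on {0..} u \<and>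
      energy m u < 2 * energy m (Qprof m) \<and>
      (u \<longlongrightarrow> 0) (at_right 0) \<and> (u \<longlongrightarrow> 0) at_top}"

end

theory Submission
  imports Defs "HOL-Real_Asymp.Real_Asymp"
begin

(* A Bogomol'nyi argument.  By AM-GM the energy density dominates m |sin u| |u_r|, which is the
   absolute value of the derivative of cos u.  If |u(r0)| = pi - delta, then cos u runs from 1
   (at r = 0) down to -cos delta (at r0) and back up to 1 (at infinity), so the energy is at
   least 2 m (1 + cos delta), which exceeds 2 E(Q) - delta1 = 4 m - delta1 once delta is small.
   For a merely locally absolutely continuous u, the identity u_r = g a.e. is the Lebesgue
   differentiation theorem (via Vitali coverings), and the chain rule for cos u is replaced by a
   Riemann-sum estimate based on the uniform continuity of u. *)

section \<open>Lebesgue differentiation of indefinite integrals\<close>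

lemma density_small_on_open_nbhd_of_zeros:
  fixes h :: "'a::euclidean_space \<Rightarrow> real"
  assumes h: "integrable lborel h" "\<And>x. 0 \<le> h x" and e: "e > 0"
  obtains U where "{x. h x = 0} \<subseteq> U" "open U" "emeasure (density lborel h) U < e"
proof -
  let ?M = "density lborel h"
  have [measurable]: "h \<in> borel_measurable borel"
    using borel_measurable_integrable[OF h(1)] by simp
  have "emeasure ?M (space ?M) = ennreal (integral\<^sup>L lborel h)"
    using h by (simp add: emeasure_density nn_integral_eq_integral)
  then have fin: "emeasure ?M (space ?M) \<noteq> \<infinity>" by simp
  have "emeasure ?M {x. h x = 0} = (\<integral>\<^sup>+ x. ennreal (h x) * indicator {x. h x = 0} x \<partial>lborel)"
    by (simp add: emeasure_density)
  also have "\<dots> = 0"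
    by (simp add: nn_integral_0_iff_AE indicator_def) (auto intro: AE_I2)
  finally have "(INF U \<in> {U. {x. h x = 0} \<subseteq> U \<and> open U}. emeasure ?M U) < e"
    using outer_regular[of ?M "{x. h x = 0}"] fin e by simp
  then show ?thesis
    using that by (auto simp: INF_less_iff)
qed

lemma Vitali_cover_measure_le:
  fixes S U :: "'a::euclidean_space set"
  assumes M: "sets M = sets borel" and U: "U \<in> sets borel"
    and cover: "\<And>x d. x \<in> S \<Longrightarrow> 0 < d \<Longrightarrow> \<exists>c r. 0 < r \<and> r < d \<and> x \<in> cball c r \<and>
       cball c r \<subseteq> U \<and> ennreal \<eta> * emeasure lborel (cball c r) \<le> emeasure M (cball c r)"
  obtains T where "S \<subseteq> T" "T \<in> sets lebesgue" "ennreal \<eta> * emeasure lebesgue T \<le> emeasure M U"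
proof -
  define K where "K = {(c, r). 0 < r \<and> cball c r \<subseteq> U \<and>
      ennreal \<eta> * emeasure lborel (cball c r) \<le> emeasure M (cball c r)}"
  have pos: "0 < snd i" if "i \<in> K" for i
    using that by (auto simp: K_def)
  have fine: "\<exists>i. i \<in> K \<and> x \<in> cball (fst i) (snd i) \<and> snd i < d" if "x \<in> S" "0 < d" for x d
    using cover[OF that] unfolding K_def by auto
  obtain C where C: "countable C" "C \<subseteq> K"
    and disj: "pairwise (\<lambda>i j. disjnt (cball (fst i) (snd i)) (cball (fst j) (snd j))) C"
    and null: "negligible (S - (\<Union>i\<in>C. cball (fst i) (snd i)))"
    by (rule Vitali_covering_theorem_cballs[of K snd S fst, OF pos fine])
  define V where "V = (\<Union>i\<in>C. cball (fst i) (snd i))"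
  have V: "V \<in> sets borel" "V \<subseteq> U"
    using C unfolding V_def K_def by (fastforce intro: sets.countable_UN'')+
  have disj': "disjoint_family_on (\<lambda>i. cball (fst i) (snd i)) C"
    using disj unfolding disjoint_family_on_def pairwise_def disjnt_def by auto
  have "ennreal \<eta> * emeasure lborel V
      = (\<integral>\<^sup>+ i. ennreal \<eta> * emeasure lborel (cball (fst i) (snd i)) \<partial>count_space C)"
    unfolding V_def using C(1) disj' by (simp add: emeasure_UN_countable nn_integral_cmult)
  also have "\<dots> \<le> (\<integral>\<^sup>+ i. emeasure M (cball (fst i) (snd i)) \<partial>count_space C)"
    using C(2) by (intro nn_integral_mono) (auto simp: K_def)
  also have "\<dots> = emeasure M V"
    unfolding V_def using C(1) disj' M by (simp add: emeasure_UN_countable)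
  also have "\<dots> \<le> emeasure M U"
    using V M U by (intro emeasure_mono) auto
  finally have ineq: "ennreal \<eta> * emeasure lborel V \<le> emeasure M U" .
  show ?thesis
  proof
    show "S \<subseteq> V \<union> (S - V)" by auto
    have "S - V \<in> null_sets lebesgue"
      using null unfolding V_def negligible_iff_null_sets .
    then show "V \<union> (S - V) \<in> sets lebesgue"
      using V by (intro sets.Un) (auto dest: null_setsD2)
    have "emeasure lebesgue (V \<union> (S - V)) = emeasure lebesgue V"
      using V by (intro emeasure_Un_null_set \<open>S - V \<in> null_sets lebesgue\<close>) auto
    also have "\<dots> = emeasure lborel V"
      using V by simp
    finally show "ennreal \<eta> * emeasure lebesgue (V \<union> (S - V)) \<le> emeasure M U"
      using ineq by simp
  qed
qed

lemma negligible_if_emeasure_small: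
  assumes "\<And>e. e > 0 \<Longrightarrow> \<exists>T. S \<subseteq> T \<and> T \<in> sets lebesgue \<and> emeasure lebesgue T < ennreal e"
  shows "negligible S"
  unfolding negligible_outer_le
proof (intro allI impI)
  fix e :: real assume "e > 0"
  then obtain T where T: "S \<subseteq> T" "T \<in> sets lebesgue" and small: "emeasure lebesgue T < ennreal e"
    using assms by blast
  then have "T \<in> lmeasurable"
    by (intro fmeasurableI) (auto intro: order.strict_trans)
  moreover have "measure lebesgue T \<le> e"
    using small \<open>e > 0\<close> unfolding emeasure_eq_measure2[OF \<open>T \<in> lmeasurable\<close>]
    by (simp add: ennreal_less_iff)
  ultimately show "\<exists>T. S \<subseteq> T \<and> T \<in> lmeasurable \<and> measure lebesgue T \<le> e"
    using T(1) by blast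
qed

lemma emeasure_density_ge_if_integral_ge:
  fixes h :: "'a::euclidean_space \<Rightarrow> real"
  assumes h: "integrable lborel h" "\<And>x. 0 \<le> h x" and "\<eta> > 0"
    and "\<eta> * measure lborel (cball c r) \<le> (LINT t:cball c r|lborel. h t)"
  shows "ennreal \<eta> * emeasure lborel (cball c r) \<le> emeasure (density lborel h) (cball c r)"
proof -
  have "emeasure (density lborel h) (cball c r)
      = (\<integral>\<^sup>+ t. ennreal (h t * indicator (cball c r) t) \<partial>lborel)"
    using h by (simp add: emeasure_density) (auto intro!: nn_integral_cong simp: indicator_def)
  also have "\<dots> = ennreal (LINT t:cball c r|lborel. h t)"
    using h by (simp add: set_lebesgue_integral_def mult.commute nn_integral_eq_integral
        integrable_real_mult_indicator)
  moreover have "emeasure lborel (cball c r) = ennreal (measure lborel (cball c r))"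
    using emeasure_lborel_cball_finite[of c r] by (intro emeasure_eq_ennreal_measure) auto
  ultimately show ?thesis
    using assms(3,4) by (simp add: ennreal_mult'[symmetric] ennreal_leI)
qed

lemma negligible_if_small_balls_carry_density:
  fixes h :: "'a::euclidean_space \<Rightarrow> real"
  assumes h: "integrable lborel h" "\<And>x. 0 \<le> h x" and \<eta>: "\<eta> > 0"
    and zero: "\<And>x. x \<in> S \<Longrightarrow> h x = 0"
    and balls: "\<And>x d. x \<in> S \<Longrightarrow> 0 < d \<Longrightarrow> \<exists>c r. 0 < r \<and> r < d \<and> x \<in> cball c r \<and>
       \<eta> * measure lborel (cball c r) \<le> (LINT t:cball c r|lborel. h t)"
  shows "negligible S"
proof (rule negligible_if_emeasure_small)
  fix e :: real assume "e > 0"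
  let ?M = "density lborel h"
  obtain U where U: "{x. h x = 0} \<subseteq> U" "open U" and MU: "emeasure ?M U < ennreal (\<eta> * e)"
    using density_small_on_open_nbhd_of_zeros[OF h, of "ennreal (\<eta> * e)"] \<eta> \<open>e > 0\<close> by auto
  have cover: "\<exists>c r. 0 < r \<and> r < d \<and> x \<in> cball c r \<and> cball c r \<subseteq> U \<and>
      ennreal \<eta> * emeasure lborel (cball c r) \<le> emeasure ?M (cball c r)" if "x \<in> S" "0 < d" for x d
  proof -
    obtain d0 where d0: "d0 > 0" "ball x d0 \<subseteq> U"
      using U zero[OF \<open>x \<in> S\<close>] openE by blast
    then obtain c r where cr: "0 < r" "r < min d (d0 / 2)" "x \<in> cball c r"
        and dens: "\<eta> * measure lborel (cball c r) \<le> (LINT t:cball c r|lborel. h t)"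
      using balls[OF \<open>x \<in> S\<close>, of "min d (d0 / 2)"] \<open>0 < d\<close> by auto
    have "cball c r \<subseteq> U"
    proof
      fix y assume "y \<in> cball c r"
      then have "y \<in> ball x d0"
        using cr dist_triangle[of x y c] by (auto simp: dist_commute)
      then show "y \<in> U"
        using d0(2) by blast
    qed
    then show ?thesis
      using cr emeasure_density_ge_if_integral_ge[OF h \<eta> dens]
      by (intro exI[of _ c] exI[of _ r]) simp
  qed
  obtain T where T: "S \<subseteq> T" "T \<in> sets lebesgue"
    and le: "ennreal \<eta> * emeasure lebesgue T \<le> emeasure ?M U"
    by (rule Vitali_cover_measure_le[of ?M U S \<eta>, OF _ _ cover]) (use U(2) in auto)
  have "emeasure lebesgue T < ennreal e"
  proof (rule ccontr)
    assume "\<not> emeasure lebesgue T < ennreal e"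
    then have "ennreal \<eta> * ennreal e \<le> ennreal \<eta> * emeasure lebesgue T"
      by (simp add: mult_left_mono)
    then show False
      using le MU \<eta> \<open>e > 0\<close> by (simp add: ennreal_mult[symmetric])
  qed
  then show "\<exists>T. S \<subseteq> T \<and> T \<in> sets lebesgue \<and> emeasure lebesgue T < ennreal e"
    using T by blast
qed

lemma set_integrable_const_Icc:
  fixes a b c :: real
  shows "set_integrable lborel {a..b} (\<lambda>_. c)"
proof -
  have "integrable lborel (indicat_real {a..b})"
    by (rule integrable_real_indicator) (auto simp: emeasure_lborel_Icc_eq)
  then show ?thesis
    unfolding set_integrable_def by simp
qed

lemma indefinite_integral_slope_gt:
  fixes u g :: "real \<Rightarrow> real"
  assumes gi: "set_integrable lborel {a..b} g"
    and ug: "\<And>x y. a \<le> x \<Longrightarrow> x \<le> y \<Longrightarrow> y \<le> b \<Longrightarrow> u y - u x = (LINT t:{x..y}|lborel. g t)"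
    and "x \<in> {a..b}" "y \<in> {a..b}" "x \<noteq> y" and slope: "q + \<eta> < (u y - u x) / (y - x)"
  shows "\<eta> * (max x y - min x y) < (LINT t:{min x y..max x y}|lborel. g t - q)"
proof -
  define lo where "lo = min x y"
  define hi where "hi = max x y"
  have "lo < hi" "a \<le> lo" "hi \<le> b"
    using assms(3-5) unfolding lo_def hi_def by auto
  have "(u y - u x) / (y - x) = (u hi - u lo) / (hi - lo)"
    unfolding lo_def hi_def by (cases "x \<le> y") (auto simp: field_simps)
  then have "(q + \<eta>) * (hi - lo) < u hi - u lo"
    using slope \<open>lo < hi\<close> by (simp add: pos_less_divide_eq)
  also have "u hi - u lo = (LINT t:{lo..hi}|lborel. g t - q) + q * (hi - lo)"
    using \<open>lo < hi\<close> \<open>a \<le> lo\<close> \<open>hi \<le> b\<close>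
      set_integral_diff(2)[OF set_integrable_subset[OF gi, of "{lo..hi}"] set_integrable_const_Icc]
    by (simp add: ug set_integral_const emeasure_lborel_Icc_eq)
  finally show ?thesis
    unfolding lo_def[symmetric] hi_def[symmetric] by (simp add: algebra_simps)
qed

lemma indefinite_integral_quotient_above_negligible:
  fixes u g :: "real \<Rightarrow> real"
  assumes gi: "set_integrable lborel {a..b} g"
    and ug: "\<And>x y. a \<le> x \<Longrightarrow> x \<le> y \<Longrightarrow> y \<le> b \<Longrightarrow> u y - u x = (LINT t:{x..y}|lborel. g t)"
    and \<eta>: "\<eta> > 0"
  shows "negligible {x \<in> {a<..<b}. g x < q \<and> (\<exists>\<^sub>F y in at x. q + \<eta> < (u y - u x) / (y - x))}"
    (is "negligible ?S")
proof (rule negligible_if_small_balls_carry_density)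
  (* h vanishes where g < q, and an interval on which u rises with slope above q + \<eta> carries
     h-mass at least \<eta> times its length. *)
  define h where "h t = max 0 ((g t - q) * indicator {a..b} t)" for t
  have gqi: "set_integrable lborel {a..b} (\<lambda>t. g t - q)"
    by (rule set_integral_diff(1)[OF gi set_integrable_const_Icc])
  then show "integrable lborel h"
    unfolding h_def set_integrable_def by (intro integrable_max) (simp_all add: mult.commute)
  show "0 \<le> h t" for t
    by (simp add: h_def)
  show "h x = 0" if "x \<in> ?S" for x
    using that by (simp add: h_def)
  show "\<exists>c r. 0 < r \<and> r < d \<and> x \<in> cball c r \<and>
      \<eta> * measure lborel (cball c r) \<le> (LINT t:cball c r|lborel. h t)" if "x \<in> ?S" "0 < d" for x d
  proof -
    have x: "x \<in> {a<..<b}" and "\<exists>\<^sub>F y in at x. q + \<eta> < (u y - u x) / (y - x)"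
      using that by auto
    then obtain y where y: "y \<noteq> x" "dist y x < min d (min (x - a) (b - x))"
        and slope: "q + \<eta> < (u y - u x) / (y - x)"
      using \<open>0 < d\<close> unfolding frequently_at
      by (metis UNIV_I greaterThanLessThan_iff min_less_iff_conj diff_gt_0_iff_gt)
    define lo where "lo = min x y"
    define hi where "hi = max x y"
    have lohi: "lo < hi" "a \<le> lo" "hi \<le> b" "hi - lo < d" "x \<in> {lo..hi}"
      using x y unfolding lo_def hi_def dist_real_def by auto
    have "\<eta> * (hi - lo) < (LINT t:{lo..hi}|lborel. g t - q)"
      unfolding lo_def hi_def
      using x y slope by (intro indefinite_integral_slope_gt[OF gi ug]) (auto simp: dist_real_def)
    also have "\<dots> \<le> (LINT t:{lo..hi}|lborel. h t)"
    proof (rule set_integral_mono)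
      show "set_integrable lborel {lo..hi} (\<lambda>t. g t - q)"
        using lohi by (intro set_integrable_subset[OF gqi]) auto
      show "set_integrable lborel {lo..hi} h"
        using \<open>integrable lborel h\<close> unfolding set_integrable_def
        by (simp add: integrable_real_mult_indicator mult.commute)
    qed (use lohi in \<open>auto simp: h_def\<close>)
    moreover have "cball ((lo + hi) / 2) ((hi - lo) / 2) = {lo..hi}"
      by (auto simp: cball_eq_atLeastAtMost field_simps)
    ultimately show ?thesis
      using lohi by (intro exI[of _ "(lo + hi) / 2"] exI[of _ "(hi - lo) / 2"]) auto
  qed
qed (fact \<eta>)

lemma indefinite_integral_quotient_eventually_le_AE:
  fixes u g :: "real \<Rightarrow> real"
  assumes gi: "set_integrable lborel {a..b} g"
    and ug: "\<And>x y. a \<le> x \<Longrightarrow> x \<le> y \<Longrightarrow> y \<le> b \<Longrightarrow> u y - u x = (LINT t:{x..y}|lborel. g t)"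
  shows "AE x in lborel. x \<in> {a<..<b} \<longrightarrow>
    (\<forall>e>0. \<forall>\<^sub>F y in at x. (u y - u x) / (y - x) \<le> g x + e)"
proof -
  define S where "S p = {x \<in> {a<..<b}. g x < fst p \<and>
      (\<exists>\<^sub>F y in at x. fst p + snd p < (u y - u x) / (y - x))}" for p
  let ?P = "\<rat> \<times> (\<rat> \<inter> {0<..})"
  have "negligible (\<Union>(S ` ?P))" (is "negligible ?N")
  proof (rule negligible_countable_Union)
    show "countable (S ` ?P)"
      by (intro countable_image countable_SIGMA countable_Int1 countable_rat)
    show "negligible T" if "T \<in> S ` ?P" for T
      using that indefinite_integral_quotient_above_negligible[OF gi ug] by (auto simp: S_def)
  qed
  then have "AE x in lebesgue. x \<notin> ?N"
    unfolding negligible_iff_null_sets by (rule AE_not_in)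
  then have "AE x in lborel. x \<notin> ?N"
    by (simp add: AE_completion_iff)
  moreover have bad_in_N: "x \<in> ?N"
    if x: "x \<in> {a<..<b}" and "e > 0" and bad: "\<exists>\<^sub>F y in at x. g x + e < (u y - u x) / (y - x)" for x e
  proof -
    obtain q where q: "q \<in> \<rat>" "g x < q" "q < g x + e / 2"
      using Rats_dense_in_real[of "g x" "g x + e / 2"] \<open>e > 0\<close> by auto
    obtain \<eta> where \<eta>: "\<eta> \<in> \<rat>" "0 < \<eta>" "\<eta> < e / 2"
      using Rats_dense_in_real[of 0 "e / 2"] \<open>e > 0\<close> by auto
    have "\<exists>\<^sub>F y in at x. q + \<eta> < (u y - u x) / (y - x)"
      using bad by (rule frequently_elim1) (use q \<eta> in linarith)
    then show ?thesis
      using x q \<eta> by (auto simp: S_def intro!: bexI[of _ "(q, \<eta>)"])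
  qed
  ultimately show ?thesis
  proof (elim AE_mp, intro AE_I2 impI allI)
    fix x e :: real
    assume "x \<notin> ?N" "x \<in> {a<..<b}" "e > 0"
    then show "\<forall>\<^sub>F y in at x. (u y - u x) / (y - x) \<le> g x + e"
      using bad_in_N[of x e] not_eventually[of "\<lambda>y. (u y - u x) / (y - x) \<le> g x + e" "at x"]
      unfolding not_le by blast
  qed
qed

lemma indefinite_integral_has_derivative_AE:
  fixes u g :: "real \<Rightarrow> real"
  assumes gi: "set_integrable lborel {a..b} g"
    and ug: "\<And>x y. a \<le> x \<Longrightarrow> x \<le> y \<Longrightarrow> y \<le> b \<Longrightarrow> u y - u x = (LINT t:{x..y}|lborel. g t)"
  shows "AE x in lborel. x \<in> {a<..<b} \<longrightarrow> (u has_real_derivative g x) (at x)"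
proof -
  have ug': "(- u y) - (- u x) = (LINT t:{x..y}|lborel. - g t)" if "a \<le> x" "x \<le> y" "y \<le> b" for x y
    using ug[OF that] unfolding set_lebesgue_integral_def by simp
  have upper: "AE x in lborel. x \<in> {a<..<b} \<longrightarrow>
      (\<forall>e>0. \<forall>\<^sub>F y in at x. (u y - u x) / (y - x) \<le> g x + e)"
    by (rule indefinite_integral_quotient_eventually_le_AE[OF gi ug])
  have "set_integrable lborel {a..b} (\<lambda>t. - g t)"
    using gi by (simp add: set_integrable_def)
  then have lower: "AE x in lborel. x \<in> {a<..<b} \<longrightarrow>
      (\<forall>e>0. \<forall>\<^sub>F y in at x. (- u y - - u x) / (y - x) \<le> - g x + e)"
    by (rule indefinite_integral_quotient_eventually_le_AE) (rule ug')
  have neg_quot: "(- u y - - u x) / (y - x) = - ((u y - u x) / (y - x))" for x y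
    by (simp add: diff_divide_distrib)
  show ?thesis
    using upper lower
  proof eventually_elim
    case (elim x)
    show ?case
      unfolding has_field_derivative_iff tendsto_iff dist_real_def
    proof (intro impI allI)
      fix e :: real assume "x \<in> {a<..<b}" "e > 0"
      with elim have "\<forall>\<^sub>F y in at x. (u y - u x) / (y - x) \<le> g x + e / 2"
          and "\<forall>\<^sub>F y in at x. (- u y - - u x) / (y - x) \<le> - g x + e / 2"
        by auto
      then show "\<forall>\<^sub>F y in at x. \<bar>(u y - u x) / (y - x) - g x\<bar> < e"
        by eventually_elim (use \<open>e > 0\<close> neg_quot in \<open>simp add: abs_less_iff\<close>)
    qed
  qed
qed

section \<open>Variation of the cosine along an indefinite integral\<close>

lemma set_integral_Icc_split:
  fixes f :: "real \<Rightarrow> real"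
  assumes "x \<le> c" "c \<le> y" "set_integrable lborel {x..y} f"
  shows "(LINT t:{x..y}|lborel. f t) = (LINT t:{x..c}|lborel. f t) + (LINT t:{c..y}|lborel. f t)"
proof -
  have "{x..y} = {x..c} \<union> {c..y}"
    using assms by auto
  moreover have "AE t in lborel. \<not> (t \<in> {x..c} \<and> t \<in> {c..y})"
    using AE_lborel_singleton[of c] by eventually_elim auto
  ultimately show ?thesis
    using assms by (simp add: set_integral_Un_AE set_integrable_subset)
qed

lemma set_integrable_abs_sin_comp_mult:
  fixes u g :: "real \<Rightarrow> real"
  assumes "continuous_on {x..y} u" "set_integrable lborel {x..y} g"
  shows "set_integrable lborel {x..y} (\<lambda>t. \<bar>sin (u t)\<bar> * \<bar>g t\<bar>)"
proof (rule set_integrable_bound[OF set_integrable_abs[OF assms(2)]])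
  have "(\<lambda>t. indicator {x..y} t *\<^sub>R u t) \<in> borel_measurable borel"
    by (rule borel_measurable_continuous_on_indicator) (use assms in auto)
  moreover have "(\<lambda>t. indicator {x..y} t *\<^sub>R g t) \<in> borel_measurable borel"
    using assms(2) unfolding set_integrable_def by (auto dest: borel_measurable_integrable)
  ultimately have "(\<lambda>t. \<bar>sin (indicator {x..y} t *\<^sub>R u t)\<bar> * \<bar>indicator {x..y} t *\<^sub>R g t\<bar>)
      \<in> borel_measurable borel"
    by measurable
  moreover have "(\<lambda>t. \<bar>sin (indicator {x..y} t *\<^sub>R u t)\<bar> * \<bar>indicator {x..y} t *\<^sub>R g t\<bar>)
      = (\<lambda>t. indicator {x..y} t *\<^sub>R (\<bar>sin (u t)\<bar> * \<bar>g t\<bar>))"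
    by (auto simp: indicator_def)
  ultimately show "set_borel_measurable lborel {x..y} (\<lambda>t. \<bar>sin (u t)\<bar> * \<bar>g t\<bar>)"
    unfolding set_borel_measurable_def by simp
  show "AE t in lborel. t \<in> {x..y} \<longrightarrow> norm (\<bar>sin (u t)\<bar> * \<bar>g t\<bar>) \<le> norm \<bar>g t\<bar>"
    by (auto simp: abs_mult intro!: mult_left_le_one_le)
qed

lemma abs_sin_diff_le:
  fixes x y :: real
  shows "\<bar>sin x - sin y\<bar> \<le> \<bar>x - y\<bar>"
proof -
  have "\<bar>sin x - sin y\<bar> = 2 * \<bar>sin ((x - y) / 2)\<bar> * \<bar>cos ((x + y) / 2)\<bar>"
    by (simp add: sin_diff_sin abs_mult)
  also have "\<dots> \<le> 2 * \<bar>(x - y) / 2\<bar> * 1"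
    using abs_sin_x_le_abs_x[of "(x - y) / 2"] abs_cos_le_one[of "(x + y) / 2"]
    by (intro mult_mono) auto
  finally show ?thesis
    by simp
qed

lemma abs_cos_diff_le:
  fixes a b :: real
  shows "\<bar>cos b - cos a\<bar> \<le> (\<bar>sin a\<bar> + \<bar>b - a\<bar>) * \<bar>b - a\<bar>"
proof -
  define h where "h = (b - a) / 2"
  have "(b + a) / 2 = a + h" "(a - b) / 2 = - h"
    by (simp_all add: h_def field_simps)
  then have "cos b - cos a = 2 * sin (a + h) * sin (- h)"
    using cos_diff_cos[of b a] by (simp only:)
  then have "\<bar>cos b - cos a\<bar> = 2 * \<bar>sin (a + h)\<bar> * \<bar>sin h\<bar>"
    by (simp add: abs_mult)
  also have "\<dots> \<le> 2 * (\<bar>sin a\<bar> + \<bar>h\<bar>) * \<bar>h\<bar>"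
    using abs_sin_diff_le[of "a + h" a] abs_sin_x_le_abs_x[of h] by (intro mult_mono) auto
  also have "\<dots> = (\<bar>sin a\<bar> + \<bar>b - a\<bar> / 2) * \<bar>b - a\<bar>"
    by (simp add: h_def abs_divide algebra_simps)
  also have "\<dots> \<le> (\<bar>sin a\<bar> + \<bar>b - a\<bar>) * \<bar>b - a\<bar>"
    by (intro mult_right_mono) auto
  finally show ?thesis .
qed

lemma interval_bound_from_local_bound:
  fixes F I :: "real \<Rightarrow> real \<Rightarrow> real"
  assumes "\<delta> > 0"
    and subadd: "\<And>x c y. a \<le> x \<Longrightarrow> x \<le> c \<Longrightarrow> c \<le> y \<Longrightarrow> y \<le> b \<Longrightarrow> F x y \<le> F x c + F c y"
    and add: "\<And>x c y. a \<le> x \<Longrightarrow> x \<le> c \<Longrightarrow> c \<le> y \<Longrightarrow> y \<le> b \<Longrightarrow> I x y = I x c + I c y"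
    and short: "\<And>x y. a \<le> x \<Longrightarrow> x \<le> y \<Longrightarrow> y \<le> b \<Longrightarrow> y - x \<le> \<delta> \<Longrightarrow> F x y \<le> I x y"
    and "a \<le> x" "x \<le> y" "y \<le> b"
  shows "F x y \<le> I x y"
proof -
  have "F x y \<le> I x y" if "a \<le> x" "x \<le> y" "y \<le> b" "y - x \<le> real n * \<delta>" for n x y
    using that
  proof (induction n arbitrary: x)
    case 0
    then show ?case
      using \<open>\<delta> > 0\<close> by (intro short) auto
  next
    case (Suc n)
    show ?case
    proof (cases "y - x \<le> \<delta>")
      case True
      then show ?thesis
        using Suc.prems by (intro short) auto
    next
      case False
      then have "F x (x + \<delta>) \<le> I x (x + \<delta>)" "F (x + \<delta>) y \<le> I (x + \<delta>) y"
        using Suc.prems \<open>\<delta> > 0\<close> by (auto intro!: short Suc.IH simp: algebra_simps)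
      moreover have "F x y \<le> F x (x + \<delta>) + F (x + \<delta>) y" "I x y = I x (x + \<delta>) + I (x + \<delta>) y"
        using Suc.prems False \<open>\<delta> > 0\<close> by (intro subadd add; simp)+
      ultimately show ?thesis
        by linarith
    qed
  qed
  moreover obtain n :: nat where "(y - x) / \<delta> \<le> real n"
    using real_arch_simple by blast
  then have "y - x \<le> real n * \<delta>"
    using \<open>\<delta> > 0\<close> by (simp add: divide_le_eq)
  ultimately show ?thesis
    using \<open>a \<le> x\<close> \<open>x \<le> y\<close> \<open>y \<le> b\<close> by blast
qed

lemma abs_cos_comp_diff_le_oscillation:
  fixes u g :: "real \<Rightarrow> real"
  assumes "x \<le> y" and gi: "set_integrable lborel {x..y} g"
    and ug: "u y - u x = (LINT t:{x..y}|lborel. g t)"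
    and cu: "continuous_on {x..y} u"
    and osc: "\<And>t. t \<in> {x..y} \<Longrightarrow> \<bar>u t - u x\<bar> \<le> \<omega>"
  shows "\<bar>cos (u y) - cos (u x)\<bar>
    \<le> (LINT t:{x..y}|lborel. \<bar>sin (u t)\<bar> * \<bar>g t\<bar>) + 2 * \<omega> * (LINT t:{x..y}|lborel. \<bar>g t\<bar>)"
proof -
  define s where "s = \<bar>sin (u x)\<bar>"
  define J where "J = (LINT t:{x..y}|lborel. \<bar>g t\<bar>)"
  have "0 \<le> J"
    unfolding J_def set_lebesgue_integral_def by (intro Bochner_Integration.integral_nonneg) auto
  have "\<bar>u y - u x\<bar> \<le> J"
    unfolding ug J_def using set_integral_norm_bound[OF gi] by simp
  moreover have "\<bar>u y - u x\<bar> \<le> \<omega>"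
    using osc \<open>x \<le> y\<close> by auto
  moreover have "\<bar>cos (u y) - cos (u x)\<bar> \<le> (s + \<bar>u y - u x\<bar>) * \<bar>u y - u x\<bar>"
    unfolding s_def by (rule abs_cos_diff_le)
  ultimately have "\<bar>cos (u y) - cos (u x)\<bar> \<le> (s + \<omega>) * J"
    by (elim order_trans) (intro mult_mono, auto simp: s_def)
  moreover have "(s - \<omega>) * J \<le> (LINT t:{x..y}|lborel. \<bar>sin (u t)\<bar> * \<bar>g t\<bar>)"
  proof -
    have "(s - \<omega>) * J = (LINT t:{x..y}|lborel. (s - \<omega>) * \<bar>g t\<bar>)"
      unfolding J_def by simp
    also have "\<dots> \<le> (LINT t:{x..y}|lborel. \<bar>sin (u t)\<bar> * \<bar>g t\<bar>)"
    proof (rule set_integral_mono)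
      show "set_integrable lborel {x..y} (\<lambda>t. (s - \<omega>) * \<bar>g t\<bar>)"
        using set_integrable_abs[OF gi] by (rule set_integrable_mult_right)
      show "set_integrable lborel {x..y} (\<lambda>t. \<bar>sin (u t)\<bar> * \<bar>g t\<bar>)"
        by (rule set_integrable_abs_sin_comp_mult[OF cu gi])
      show "(s - \<omega>) * \<bar>g t\<bar> \<le> \<bar>sin (u t)\<bar> * \<bar>g t\<bar>" if "t \<in> {x..y}" for t
        using abs_sin_diff_le[of "u t" "u x"] osc[OF that] unfolding s_def
        by (intro mult_right_mono) auto
    qed
    finally show ?thesis .
  qed
  ultimately show ?thesis
    unfolding J_def[symmetric] by (simp add: algebra_simps)
qed

lemma abs_cos_comp_diff_le_integral_plus:
  fixes u g :: "real \<Rightarrow> real"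
  assumes "a \<le> b" "\<omega> > 0" and gi: "set_integrable lborel {a..b} g"
    and ug: "\<And>x y. a \<le> x \<Longrightarrow> x \<le> y \<Longrightarrow> y \<le> b \<Longrightarrow> u y - u x = (LINT t:{x..y}|lborel. g t)"
    and cu: "continuous_on {a..b} u"
  shows "\<bar>cos (u b) - cos (u a)\<bar>
    \<le> (LINT t:{a..b}|lborel. \<bar>sin (u t)\<bar> * \<bar>g t\<bar>) + 2 * \<omega> * (LINT t:{a..b}|lborel. \<bar>g t\<bar>)"
proof -
  define I where "I x y = (LINT t:{x..y}|lborel. \<bar>sin (u t)\<bar> * \<bar>g t\<bar>)" for x y
  define J where "J x y = (LINT t:{x..y}|lborel. \<bar>g t\<bar>)" for x y
  have gsub: "set_integrable lborel {x..y} g" if "a \<le> x" "y \<le> b" for x y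
    using that by (intro set_integrable_subset[OF gi]) auto
  have csub: "continuous_on {x..y} u" if "a \<le> x" "y \<le> b" for x y
    using that by (intro continuous_on_subset[OF cu]) auto
  obtain \<delta> where "\<delta> > 0"
    and \<delta>: "\<And>x x'. x \<in> {a..b} \<Longrightarrow> x' \<in> {a..b} \<Longrightarrow> dist x' x < \<delta> \<Longrightarrow> dist (u x') (u x) < \<omega>"
    using compact_uniformly_continuous[OF cu compact_Icc] \<open>\<omega> > 0\<close>
    unfolding uniformly_continuous_on_def by metis
  show ?thesis
    unfolding I_def[symmetric] J_def[symmetric]
  proof (rule interval_bound_from_local_bound[where F = "\<lambda>x y. \<bar>cos (u y) - cos (u x)\<bar>"
        and I = "\<lambda>x y. I x y + 2 * \<omega> * J x y" and \<delta> = "\<delta> / 2"])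
    fix x c y assume "a \<le> x" "x \<le> c" "c \<le> y" "y \<le> b"
    show "\<bar>cos (u y) - cos (u x)\<bar> \<le> \<bar>cos (u c) - cos (u x)\<bar> + \<bar>cos (u y) - cos (u c)\<bar>"
      using abs_triangle_ineq[of "cos (u c) - cos (u x)" "cos (u y) - cos (u c)"] by simp
    have "I x y = I x c + I c y" "J x y = J x c + J c y"
      unfolding I_def J_def using \<open>a \<le> x\<close> \<open>x \<le> c\<close> \<open>c \<le> y\<close> \<open>y \<le> b\<close>
      by (intro set_integral_Icc_split set_integrable_abs_sin_comp_mult set_integrable_abs gsub csub;
          simp)+
    then show "I x y + 2 * \<omega> * J x y = I x c + 2 * \<omega> * J x c + (I c y + 2 * \<omega> * J c y)"
      by (simp add: algebra_simps)
  next
    fix x y assume xy: "a \<le> x" "x \<le> y" "y \<le> b" "y - x \<le> \<delta> / 2"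
    show "\<bar>cos (u y) - cos (u x)\<bar> \<le> I x y + 2 * \<omega> * J x y"
      unfolding I_def J_def
    proof (rule abs_cos_comp_diff_le_oscillation)
      show "\<bar>u t - u x\<bar> \<le> \<omega>" if "t \<in> {x..y}" for t
        using xy that \<open>\<delta> > 0\<close> \<delta>[of x t] by (auto simp: dist_real_def)
    qed (use xy in \<open>auto intro: gsub csub ug\<close>)
  qed (use \<open>a \<le> b\<close> \<open>\<delta> > 0\<close> in auto)
qed

lemma abs_cos_comp_diff_le_integral:
  fixes u g :: "real \<Rightarrow> real"
  assumes "a \<le> b" and gi: "set_integrable lborel {a..b} g"
    and ug: "\<And>x y. a \<le> x \<Longrightarrow> x \<le> y \<Longrightarrow> y \<le> b \<Longrightarrow> u y - u x = (LINT t:{x..y}|lborel. g t)"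
    and cu: "continuous_on {a..b} u"
  shows "\<bar>cos (u b) - cos (u a)\<bar> \<le> (LINT t:{a..b}|lborel. \<bar>sin (u t)\<bar> * \<bar>g t\<bar>)"
proof (rule tendsto_lowerbound)
  let ?I = "LINT t:{a..b}|lborel. \<bar>sin (u t)\<bar> * \<bar>g t\<bar>" and ?J = "LINT t:{a..b}|lborel. \<bar>g t\<bar>"
  show "((\<lambda>\<omega>. ?I + 2 * \<omega> * ?J) \<longlongrightarrow> ?I) (at_right 0)"
    by (auto intro!: tendsto_eq_intros)
  show "\<forall>\<^sub>F \<omega> in at_right 0. \<bar>cos (u b) - cos (u a)\<bar> \<le> ?I + 2 * \<omega> * ?J"
    using eventually_at_right_less
    by (rule eventually_mono) (rule abs_cos_comp_diff_le_integral_plus[OF \<open>a \<le> b\<close> _ gi ug cu])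
qed simp

section \<open>Lower bounds for the energy\<close>

lemma mult_abs_le_energy_density:
  fixes r d s c :: real
  assumes "r > 0" "c \<ge> 0"
  shows "c * (\<bar>s\<bar> * \<bar>d\<bar>) \<le> (1/2) * (d\<^sup>2 + c\<^sup>2 * s\<^sup>2 / r\<^sup>2) * r"
proof -
  have "(1/2) * (d\<^sup>2 + c\<^sup>2 * s\<^sup>2 / r\<^sup>2) * r - c * (\<bar>s\<bar> * \<bar>d\<bar>) = (\<bar>d\<bar> * r - c * \<bar>s\<bar>)\<^sup>2 / (2 * r)"
    using assms by (simp add: field_simps power2_eq_square)
  moreover have "(\<bar>d\<bar> * r - c * \<bar>s\<bar>)\<^sup>2 / (2 * r) \<ge> 0"
    using assms by simp
  ultimately show ?thesis
    by linarith
qed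

lemma energy_ge_sin_integral:
  fixes u g :: "real \<Rightarrow> real"
  assumes "0 < a" "a \<le> b" and cu: "continuous_on {a..b} u"
    and gi: "\<And>x y. 0 < x \<Longrightarrow> x \<le> y \<Longrightarrow> set_integrable lborel {x..y} g"
    and ug: "\<And>x y. 0 < x \<Longrightarrow> x \<le> y \<Longrightarrow> u y - u x = (LINT t:{x..y}|lborel. g t)"
  shows "ennreal (real m * (LINT t:{a..b}|lborel. \<bar>sin (u t)\<bar> * \<bar>g t\<bar>)) \<le> energy m u"
proof -
  have sgi: "set_integrable lborel {a..b} (\<lambda>t. \<bar>sin (u t)\<bar> * \<bar>g t\<bar>)"
    using assms by (intro set_integrable_abs_sin_comp_mult cu gi)
  have deriv: "AE t in lborel. t \<in> {a/2<..<2*b} \<longrightarrow> (u has_real_derivative g t) (at t)"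
    using assms by (intro indefinite_integral_has_derivative_AE[OF gi ug]) auto
  have "ennreal (real m * (LINT t:{a..b}|lborel. \<bar>sin (u t)\<bar> * \<bar>g t\<bar>))
      = (\<integral>\<^sup>+t. ennreal (real m * (\<bar>sin (u t)\<bar> * \<bar>g t\<bar>) * indicator {a..b} t) \<partial>lborel)"
    using sgi unfolding set_integrable_def set_lebesgue_integral_def
    by (subst nn_integral_eq_integral) (auto simp: mult_ac)
  also have "\<dots> \<le> energy m u"
    unfolding energy_def
  proof (rule nn_integral_mono_AE)
    show "AE t in lborel. ennreal (real m * (\<bar>sin (u t)\<bar> * \<bar>g t\<bar>) * indicator {a..b} t)
        \<le> indicator {0<..} t * ennreal (1 / 2 * ((deriv u t)\<^sup>2 + (real m)\<^sup>2 * (sin (u t))\<^sup>2 / t\<^sup>2) * t)"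
      using deriv
    proof eventually_elim
      case (elim t)
      show ?case
      proof (cases "t \<in> {a..b}")
        case True
        then have "deriv u t = g t"
          using elim \<open>0 < a\<close> DERIV_imp_deriv by force
        then show ?thesis
          using True \<open>0 < a\<close> mult_abs_le_energy_density[of t "real m" "sin (u t)" "g t"]
          by (simp add: ennreal_leI)
      qed simp
    qed
  qed
  finally show ?thesis .
qed

lemma energy_ge_cos_variation:
  fixes u :: "real \<Rightarrow> real"
  assumes "loc_abs_cont u" and cu: "continuous_on {0<..} u"
    and lim0: "(u \<longlongrightarrow> 0) (at_right 0)" and lim_inf: "(u \<longlongrightarrow> 0) at_top" and "r0 > 0"
  shows "ennreal (2 * real m * (1 - cos (u r0))) \<le> energy m u"
proof -
  obtain g where g: "\<And>a b. 0 < a \<Longrightarrow> a \<le> b \<Longrightarrow> set_integrable lborel {a..b} g \<and> u b - u a = (LBINT t=a..b. g t)"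
    using \<open>loc_abs_cont u\<close> unfolding loc_abs_cont_def by blast
  define c0 where "c0 = cos (u r0)"
  define W where "W a b = real m * (\<bar>c0 - a\<bar> + \<bar>b - c0\<bar>)" for a b
  have W_le: "ennreal (W (cos (u \<epsilon>)) (cos (u R))) \<le> energy m u" if "0 < \<epsilon>" "\<epsilon> \<le> r0" "r0 \<le> R" for \<epsilon> R
  proof -
    have gi: "set_integrable lborel {x..y} g" and ug: "u y - u x = (LINT t:{x..y}|lborel. g t)"
      if "0 < x" "x \<le> y" for x y
      using g[OF that] interval_integral_Icc[OF that(2)] by auto
    have cs: "continuous_on {x..y} u" if "0 < x" for x y
      using that by (intro continuous_on_subset[OF cu]) auto
    let ?I = "\<lambda>x y. LINT t:{x..y}|lborel. \<bar>sin (u t)\<bar> * \<bar>g t\<bar>"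
    have "\<bar>c0 - cos (u \<epsilon>)\<bar> \<le> ?I \<epsilon> r0" "\<bar>cos (u R) - c0\<bar> \<le> ?I r0 R"
      unfolding c0_def using that by (intro abs_cos_comp_diff_le_integral gi ug cs; simp)+
    moreover have "?I \<epsilon> R = ?I \<epsilon> r0 + ?I r0 R"
      using that by (intro set_integral_Icc_split set_integrable_abs_sin_comp_mult gi cs) auto
    ultimately have "W (cos (u \<epsilon>)) (cos (u R)) \<le> real m * ?I \<epsilon> R"
      unfolding W_def by (intro mult_left_mono) auto
    then have "ennreal (W (cos (u \<epsilon>)) (cos (u R))) \<le> ennreal (real m * ?I \<epsilon> R)"
      by (rule ennreal_leI)
    also have "\<dots> \<le> energy m u"
      using that by (intro energy_ge_sin_integral gi ug cs) auto
    finally show ?thesis .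
  qed
  have W_le': "ennreal (W 1 (cos (u R))) \<le> energy m u" if "r0 \<le> R" for R
  proof (rule tendsto_upperbound)
    show "((\<lambda>\<epsilon>. ennreal (W (cos (u \<epsilon>)) (cos (u R)))) \<longlongrightarrow> ennreal (W 1 (cos (u R)))) (at_right 0)"
      unfolding W_def using lim0 by (auto intro!: tendsto_eq_intros)
    show "\<forall>\<^sub>F \<epsilon> in at_right 0. ennreal (W (cos (u \<epsilon>)) (cos (u R))) \<le> energy m u"
      unfolding eventually_at_right_field using that \<open>r0 > 0\<close>
      by (intro exI[of _ r0]) (auto intro!: W_le)
  qed simp
  have "ennreal (W 1 1) \<le> energy m u"
  proof (rule tendsto_upperbound)
    show "((\<lambda>R. ennreal (W 1 (cos (u R)))) \<longlongrightarrow> ennreal (W 1 1)) at_top"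
      unfolding W_def using lim_inf by (auto intro!: tendsto_eq_intros)
    show "\<forall>\<^sub>F R in at_top. ennreal (W 1 (cos (u R))) \<le> energy m u"
      using eventually_ge_at_top[of r0] by (rule eventually_mono) (rule W_le')
  qed simp
  moreover have "W 1 1 = 2 * real m * (1 - cos (u r0))"
    using cos_le_one[of "u r0"] by (simp add: W_def c0_def)
  ultimately show ?thesis
    by simp
qed

section \<open>The energy of the harmonic map\<close>

lemma Qprof_has_derivative:
  assumes "m > 0"
  shows "(Qprof m has_real_derivative - 2 * real m * r ^ (m - 1) / (1 + r ^ (2 * m))) (at r)"
proof -
  have "((\<lambda>r. pi - 2 * arctan (r ^ m)) has_real_derivative
      - 2 * (inverse (1 + (r ^ m)\<^sup>2) * (real m * r ^ (m - 1)))) (at r)"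
    by (auto intro!: derivative_eq_intros)
  moreover have "(r ^ m)\<^sup>2 = r ^ (2 * m)"
    by (simp add: power_mult[symmetric] mult.commute)
  ultimately show ?thesis
    by (simp add: Qprof_def[abs_def] divide_simps add_pos_nonneg mult.assoc)
qed

lemma sin_Qprof: "sin (Qprof m r) = 2 * r ^ m / (1 + r ^ (2 * m))"
proof -
  define x where "x = r ^ m"
  have "sqrt (1 + x\<^sup>2) * sqrt (1 + x\<^sup>2) = 1 + x\<^sup>2"
    by (simp add: add_nonneg_nonneg)
  then have "sin (2 * arctan x) = 2 * x / (1 + x\<^sup>2)"
    by (simp add: sin_double sin_arctan cos_arctan)
  moreover have "x\<^sup>2 = r ^ (2 * m)"
    by (simp add: x_def power_mult[symmetric] mult.commute)
  ultimately show ?thesis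
    by (simp add: Qprof_def x_def)
qed

lemma Qprof_energy_density:
  fixes r :: real
  assumes "m > 0" "r > 0"
  shows "(1/2) * ((deriv (Qprof m) r)\<^sup>2 + (real m)\<^sup>2 * (sin (Qprof m r))\<^sup>2 / r\<^sup>2) * r
    = 4 * (real m)\<^sup>2 * r ^ (2 * m - 1) / (1 + r ^ (2 * m))\<^sup>2"
proof -
  define p where "p = r ^ m"
  have powers: "r ^ (m - 1) = p / r" "r ^ (2 * m - 1) = p\<^sup>2 / r" "r ^ (2 * m) = p\<^sup>2"
    using assms by (simp_all add: p_def power_diff power_mult[symmetric] mult.commute)
  have dQ: "deriv (Qprof m) r = - 2 * real m * r ^ (m - 1) / (1 + r ^ (2 * m))"
    using Qprof_has_derivative[OF \<open>m > 0\<close>] by (rule DERIV_imp_deriv)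
  define D where "D = 1 + p\<^sup>2"
  have "D \<noteq> 0"
    unfolding D_def using zero_le_power2[of p] by linarith
  then show ?thesis
    using \<open>r > 0\<close> unfolding dQ sin_Qprof powers p_def[symmetric] D_def[symmetric]
    by (simp add: field_simps power2_eq_square)
qed

lemma energy_Qprof:
  assumes "m > 0"
  shows "energy m (Qprof m) = ennreal (2 * real m)"
proof -
  define f where "f r = 4 * (real m)\<^sup>2 * r ^ (2 * m - 1) / (1 + r ^ (2 * m))\<^sup>2" for r :: real
  define F where "F r = - 2 * real m / (1 + r ^ (2 * m))" for r :: real
  have D: "1 + r ^ (2 * m) > 0" for r :: real
    by (simp add: add_pos_nonneg)
  have "(F has_real_derivative f r) (at r)" for r
  proof -
    have "(F has_real_derivative 2 * real m * (real (2 * m) * r ^ (2 * m - 1)) / (1 + r ^ (2 * m))\<^sup>2) (at r)"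
      unfolding F_def[abs_def] using D[of r]
      by (auto intro!: derivative_eq_intros simp: power2_eq_square)
    then show ?thesis
      by (simp add: f_def power2_eq_square algebra_simps)
  qed
  moreover have "isCont f r" for r
    unfolding f_def using D[of r] by (auto intro!: continuous_intros)
  moreover have f_nonneg: "0 \<le> f r" if "0 < r" for r
    unfolding f_def using that by simp
  moreover have "((F \<circ> real_of_ereal) \<longlongrightarrow> - 2 * real m) (at_right (ereal 0))"
    unfolding ereal_tendsto_simps F_def using \<open>m > 0\<close>
    by (auto intro!: tendsto_eq_intros simp: zero_power)
  moreover have "((F \<circ> real_of_ereal) \<longlongrightarrow> 0) (at_left \<infinity>)"
    unfolding ereal_tendsto_simps F_def using \<open>m > 0\<close> by real_asymp
  ultimately have integrable: "set_integrable lborel (einterval 0 \<infinity>) f"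
    and integral: "(LBINT r=0..\<infinity>. f r) = 2 * real m"
    using interval_integral_FTC_nonneg[of 0 \<infinity> F f "- 2 * real m" 0]
    by (auto simp: zero_ereal_def)
  have "einterval 0 \<infinity> = {0<..}"
    by (auto simp: einterval_iff)
  then have "energy m (Qprof m) = (\<integral>\<^sup>+ r. ennreal (indicator {0<..} r * f r) \<partial>lborel)"
    unfolding energy_def using Qprof_energy_density[OF \<open>m > 0\<close>]
    by (intro nn_integral_cong) (auto simp: f_def indicator_def)
  also have "\<dots> = ennreal (2 * real m)"
    using integrable integral \<open>einterval 0 \<infinity> = {0<..}\<close> f_nonneg
    by (subst nn_integral_eq_integral) (auto simp: set_integrable_def interval_lebesgue_integral_def
        set_lebesgue_integral_def zero_ereal_def indicator_def)
  finally show ?thesis .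
qed

lemma twice_energy_Qprof_minus:
  assumes "m > 0" "d \<ge> 0"
  shows "2 * energy m (Qprof m) - ennreal d = ennreal (4 * real m - d)"
proof -
  have "2 * energy m (Qprof m) = ennreal (4 * real m)"
    using ennreal_mult[of 2 "2 * real m"] \<open>m > 0\<close> by (simp add: energy_Qprof)
  then show ?thesis
    using \<open>d \<ge> 0\<close> by (simp add: ennreal_minus)
qed

lemma continuous_abs_crossing:
  fixes u :: "real \<Rightarrow> real"
  assumes cu: "continuous_on {0..} u" and lim0: "(u \<longlongrightarrow> 0) (at_right 0)"
    and "0 < c" "0 \<le> r" "c \<le> \<bar>u r\<bar>"
  obtains r0 where "0 < r0" "\<bar>u r0\<bar> = c"
proof -
  have "(u \<longlongrightarrow> u 0) (at_right 0)"
    using cu by (auto simp: continuous_on_def intro: tendsto_within_subset)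
  then have "u 0 = 0"
    using lim0 by (rule tendsto_unique[rotated]) simp
  moreover have "continuous_on {0..r} (\<lambda>t. \<bar>u t\<bar>)"
    by (intro continuous_intros continuous_on_subset[OF cu]) auto
  ultimately obtain r0 where "0 \<le> r0" "\<bar>u r0\<bar> = c"
    using IVT'[of "\<lambda>t. \<bar>u t\<bar>" 0 c r] assms by auto
  moreover have "r0 \<noteq> 0"
    using \<open>u 0 = 0\<close> \<open>\<bar>u r0\<bar> = c\<close> \<open>0 < c\<close> by auto
  ultimately show ?thesis
    by (intro that) auto
qed

lemma small_angle_with_cos_margin:
  fixes c \<delta>1 :: real
  assumes "\<delta>1 > 0"
  obtains \<delta> where "0 < \<delta>" "\<delta> < pi" "4 * c - \<delta>1 < 2 * c * (1 + cos \<delta>)"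
proof -
  have "((\<lambda>\<delta>. 2 * c * (1 + cos \<delta>)) \<longlongrightarrow> 4 * c) (at_right 0)"
    by (auto intro!: tendsto_eq_intros)
  then have "\<forall>\<^sub>F \<delta> in at_right 0. 4 * c - \<delta>1 < 2 * c * (1 + cos \<delta>)"
    using \<open>\<delta>1 > 0\<close> by (intro order_tendstoD(1)) auto
  moreover have "\<forall>\<^sub>F \<delta> in at_right 0. \<delta> < pi"
    using order_tendstoD(2)[OF tendsto_ident_at pi_gt_zero] .
  ultimately have "\<forall>\<^sub>F \<delta> in at_right 0. 0 < \<delta> \<and> \<delta> < pi \<and> 4 * c - \<delta>1 < 2 * c * (1 + cos \<delta>)"
    using eventually_at_right_less by eventually_elim auto
  then show ?thesis
    using that eventually_happens'[of "at_right (0::real)"] by auto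
qed

lemma E0_energy_ge_cos:
  assumes "u \<in> E0 m" "r0 > 0"
  shows "ennreal (2 * real m * (1 - cos (u r0))) \<le> energy m u"
proof (rule energy_ge_cos_variation)
  show "continuous_on {0<..} u"
    using assms(1) by (auto simp: E0_def intro: continuous_on_subset)
qed (use assms in \<open>auto simp: E0_def\<close>)

theorem lemma2p1:
  fixes m :: nat and \<delta>1 :: real
  assumes "m \<ge> 1" and "\<delta>1 > 0"
  shows "\<exists>\<delta>2 > 0. \<forall>u \<in> E0 m.
           energy m u \<le> 2 * energy m (Qprof m) - ennreal \<delta>1 \<longrightarrow>
           (\<forall>r \<ge> 0. \<bar>u r\<bar> \<le> pi - \<delta>2)"
proof -
  obtain \<delta>2 where "0 < \<delta>2" "\<delta>2 < pi" and \<delta>2: "4 * real m - \<delta>1 < 2 * real m * (1 + cos \<delta>2)"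
    using small_angle_with_cos_margin[OF \<open>\<delta>1 > 0\<close>] by blast
  have bound: "2 * energy m (Qprof m) - ennreal \<delta>1 = ennreal (4 * real m - \<delta>1)"
    using assms by (simp add: twice_energy_Qprof_minus)
  show ?thesis
  proof (intro exI[of _ \<delta>2] conjI ballI impI allI \<open>0 < \<delta>2\<close>)
    fix u and r :: real
    assume u: "u \<in> E0 m" and small: "energy m u \<le> 2 * energy m (Qprof m) - ennreal \<delta>1" and "r \<ge> 0"
    show "\<bar>u r\<bar> \<le> pi - \<delta>2"
    proof (rule ccontr)
      assume "\<not> \<bar>u r\<bar> \<le> pi - \<delta>2"
      then obtain r0 where "0 < r0" "\<bar>u r0\<bar> = pi - \<delta>2"
        using continuous_abs_crossing[of u "pi - \<delta>2" r] u \<open>\<delta>2 < pi\<close> \<open>r \<ge> 0\<close> by (auto simp: E0_def)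
      then have "cos (u r0) = - cos \<delta>2"
        by (metis cos_abs_real cos_pi_minus)
      then have "ennreal (2 * real m * (1 + cos \<delta>2)) \<le> energy m u"
        using E0_energy_ge_cos[OF u \<open>0 < r0\<close>] by simp
      also have "\<dots> \<le> ennreal (4 * real m - \<delta>1)"
        using small bound by simp
      finally have "ennreal (2 * real m * (1 + cos \<delta>2)) \<le> ennreal (4 * real m - \<delta>1)" .
      moreover have "0 < 2 * real m * (1 + cos \<delta>2)"
        using \<open>m \<ge> 1\<close> \<open>0 < \<delta>2\<close> \<open>\<delta>2 < pi\<close> cos_monotone_0_pi[of \<delta>2 pi] by simp
      ultimately show False
        using \<delta>2 by (auto simp: ennreal_le_iff2)
    qed
  qed
qed

end
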